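(* Let $(E,C)$ be a finite bipartite separated graph with $\mathcal H(F_\infty,D^\infty)=\{\emptyset,F_\infty^0\}$. Then for every $v\in F_\infty^0$ there is at most one $X\in D^\infty_v$ with $|X|>1$.
   Context: Separated graph $(E,C)$: $E=(E^0,E^1,r,s)$, $C=\bigsqcup_vC_v$ with $C_v$ a partition of $r^{-1}(v)$ into non-empty sets. Finite bipartite: $E$ finite, $E^0=E^{0,0}\sqcup E^{0,1}$, $s(E^1)=E^{0,1}$, $r(E^1)=E^{0,0}$. Write $C_u=\{X^u_1,\dots,X^u_{k_u}\}$. $(E_1,C^1)$: $E_1^{0,0}=E^{0,1}$, $E_1^{0,1}=\{v(x_1,\dots,x_{k_u}):u\in E^{0,0},x_j\in X^u_j\}$, edges $\alpha^{x_i}(x_1,\dots,\widehat{x_i},\dots,x_{k_u})$ with range $s(x_i)$ and source $v(x_1,\dots,x_{k_u})$, $C^1_v=\{X(x):x\in s^{-1}(v)\}$ with $X(x_i)=\{\alpha^{x_i}(x_1,\dots,\widehat{x_i},\dots,x_{k_u}):x_j\in X^u_j,j\ne i\}$. Inductively $(E_{n+1},C^{n+1})=((E_n)_1,(C^n)^1)$, $(E_0,C^0)=(E,C)$, and $(F_\infty,D^\infty)=\bigcup_n(E_n,C^n)$ glued along $E_n^{0,1}=E_{n+1}^{0,0}$ (so $D^\infty_v=C^n_v$ for $v\in E_n^{0,0}$). For a separated graph $(F,D)$, $H\subseteq F^0$ is hereditary if $r(e)\in H\Rightarrow s(e)\in H$, and $D$-saturated if $s(X)\subseteq H$ for some $X\in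 D_v$ implies $v\in H$; $\mathcal H(F,D)$ is the set of hereditary $D$-saturated subsets. *)

theory Defs
  imports Main "HOL-Library.FSet"
begin

record 'a sgraph =
  verts :: "'a set"
  edges :: "'a set"
  rng   :: "'a \<Rightarrow> 'a"
  src   :: "'a \<Rightarrow> 'a"
  sepn  :: "'a \<Rightarrow> 'a set set"

definition hereditary :: "'a sgraph \<Rightarrow> 'a set \<Rightarrow> bool" where
  "hereditary G H \<longleftrightarrow> H \<subseteq> verts G \<and>
     (\<forall>e\<in>edges G. rng G e \<in> H \<longrightarrow> src G e \<in> H)"

definition saturated :: "'a sgraph \<Rightarrow> 'a set \<Rightarrow> bool" where
  "saturated G H \<longleftrightarrow>
     (\<forall>v\<in>verts G. \<forall>X\<in>sepn G v. src G ` X \<subseteq> H \<longrightarrow> v \<in> H)"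

definition HS :: "'a sgraph \<Rightarrow> 'a set set" where
  "HS G = {H. H \<subseteq> verts G \<and> hereditary G H \<and> saturated G H}"

definition fin_bipartite_sep_graph ::
  "'v set \<Rightarrow> 'v set \<Rightarrow> 'e set \<Rightarrow> ('e \<Rightarrow> 'v) \<Rightarrow> ('e \<Rightarrow> 'v) \<Rightarrow> ('v \<Rightarrow> 'e set set) \<Rightarrow> bool"
  where
  "fin_bipartite_sep_graph V00 V01 Ed r s C \<longleftrightarrow>
     finite V00 \<and> finite V01 \<and> finite Ed \<and> V00 \<inter> V01 = {} \<and>
     r ` Ed = V00 \<and> s ` Ed = V01 \<and>
     (\<forall>v\<in>V00 \<union> V01.
        (\<forall>X\<in>C v. X \<noteq> {}) \<and>
        \<Union>(C v) = {e\<in>Ed. r e = v} \<and>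
        (\<forall>X\<in>C v. \<forall>Y\<in>C v. X \<noteq> Y \<longrightarrow> X \<inter> Y = {}))"

text \<open>Universe of names: base vertices/edges, vertices v(x_1,...,x_k) attached to
  u (represented by u and the finite set {x_1,...,x_k} of chosen edges, one from each
  member of C_u), and edges alpha^{x}(...) represented by (source vertex, x).\<close>
datatype ('v,'e) obj = V0 'v | E0 'e | Vx "('v,'e) obj" "('v,'e) obj fset"
  | Ex "('v,'e) obj" "('v,'e) obj"

record 'a bsg =
  b00 :: "'a set"
  b01 :: "'a set"
  bE  :: "'a set"
  br  :: "'a \<Rightarrow> 'a"
  bs  :: "'a \<Rightarrow> 'a"
  bC  :: "'a \<Rightarrow> 'a set set"

definition step_verts :: "('v,'e) obj bsg \<Rightarrow> ('v,'e) obj set" where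
  "step_verts G = {Vx u S | u S. u \<in> b00 G \<and> fset S \<subseteq> \<Union>(bC G u) \<and>
                      (\<forall>X\<in>bC G u. \<exists>!x. x \<in> fset S \<inter> X)}"

definition step_edges :: "('v,'e) obj bsg \<Rightarrow> ('v,'e) obj set" where
  "step_edges G = {Ex (Vx u S) x | u S x. Vx u S \<in> step_verts G \<and> x \<in> fset S}"

definition step :: "('v,'e) obj bsg \<Rightarrow> ('v,'e) obj bsg" where
  "step G = \<lparr> b00 = b01 G,
              b01 = step_verts G,
              bE  = step_edges G,
              br  = (\<lambda>e. case e of Ex w x \<Rightarrow> bs G x | _ \<Rightarrow> undefined),
              bs  = (\<lambda>e. case e of Ex w x \<Rightarrow> w | _ \<Rightarrow> undefined),
              bC  = (\<lambda>v. if v \<in> b01 G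
                         then {{Ex w x | w. Ex w x \<in> step_edges G} | x. x \<in> bE G \<and> bs G x = v}
                         else {}) \<rparr>"

definition level0 ::
  "'v set \<Rightarrow> 'v set \<Rightarrow> 'e set \<Rightarrow> ('e \<Rightarrow> 'v) \<Rightarrow> ('e \<Rightarrow> 'v) \<Rightarrow> ('v \<Rightarrow> 'e set set) \<Rightarrow> ('v,'e) obj bsg"
  where
  "level0 V00 V01 Ed r s C = \<lparr> b00 = V0 ` V00, b01 = V0 ` V01, bE = E0 ` Ed,
      br = (\<lambda>e. case e of E0 x \<Rightarrow> V0 (r x) | _ \<Rightarrow> undefined),
      bs = (\<lambda>e. case e of E0 x \<Rightarrow> V0 (s x) | _ \<Rightarrow> undefined),
      bC = (\<lambda>v. case v of V0 u \<Rightarrow> (if u \<in> V00 then image E0 ` C u else {}) | _ \<Rightarrow> {}) \<rparr>"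

definition level ::
  "'v set \<Rightarrow> 'v set \<Rightarrow> 'e set \<Rightarrow> ('e \<Rightarrow> 'v) \<Rightarrow> ('e \<Rightarrow> 'v) \<Rightarrow> ('v \<Rightarrow> 'e set set) \<Rightarrow> nat \<Rightarrow> ('v,'e) obj bsg"
  where "level V00 V01 Ed r s C n = (step ^^ n) (level0 V00 V01 Ed r s C)"

text \<open>(F_infinity, D^infinity): union of the E_n glued along E_n^{0,1} = E_{n+1}^{0,0};
  range/source of an edge are those of the level it lives in, and
  D^infinity_v = C^n_v for v in E_n^{0,0}.\<close>
definition Finf ::
  "'v set \<Rightarrow> 'v set \<Rightarrow> 'e set \<Rightarrow> ('e \<Rightarrow> 'v) \<Rightarrow> ('e \<Rightarrow> 'v) \<Rightarrow> ('v \<Rightarrow> 'e set set) \<Rightarrow> ('v,'e) obj sgraph"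
  where
  "Finf V00 V01 Ed r s C =
     (let L = level V00 V01 Ed r s C in
      \<lparr> verts = (\<Union>n. b00 (L n) \<union> b01 (L n)),
        edges = (\<Union>n. bE (L n)),
        rng = (\<lambda>e. br (L (LEAST n. e \<in> bE (L n))) e),
        src = (\<lambda>e. bs (L (LEAST n. e \<in> bE (L n))) e),
        sepn = (\<lambda>v. if (\<exists>n. v \<in> b00 (L n))
                    then bC (L (LEAST n. v \<in> b00 (L n))) v else {}) \<rparr>)"

end

theory Submission
  imports Defs
begin

text \<open>Suppose a vertex v of F_inf carries two classes X \<noteq> Y with a \<noteq> a' in X and b \<noteq> b' in Y.
  Let H_0 be the set of vertices v(x_1,...,x_k) over v whose chosen edges include a and b, and
  H_(m+1) the set of vertices one of whose chosen edges has its source in H_m. The union H of the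
  H_m is hereditary by construction, non-empty, and misses v. It is also saturated: if every edge of a
  class X(x) at a vertex w has its source in H but w is not in H, then in every class at r(x) one can
  choose an edge whose source is not in H (by induction on m), and the vertex through x built from
  these choices is a source of X(x) outside H. On the lowest layer the choices a' and b' play this
  role, because a vertex picks exactly one edge from each class. So H is a hereditary saturated set
  other than the empty set and F_inf^0.\<close>

locale wf_bsg =
  fixes G :: "('v, 'e) obj bsg"
  assumes finite_b00: "finite (b00 G)"
    and finite_b01: "finite (b01 G)"
    and finite_bE: "finite (bE G)"
    and finite_bC: "u \<in> b00 G \<Longrightarrow> finite (bC G u)"
    and bC_nonempty: "u \<in> b00 G \<Longrightarrow> X \<in> bC G u \<Longrightarrow> X \<noteq> {}"
    and bC_disjoint: "u \<in> b00 G \<Longrightarrow> X \<in> bC G u \<Longrightarrow> Y \<in> bC G u \<Longrightarrow> X \<noteq> Y \<Longrightarrow> X \<inter> Y = {}"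
    and bC_subset_bE: "u \<in> b00 G \<Longrightarrow> X \<in> bC G u \<Longrightarrow> X \<subseteq> bE G"
    and br_in_b00: "e \<in> bE G \<Longrightarrow> br G e \<in> b00 G"
    and bs_in_b01: "e \<in> bE G \<Longrightarrow> bs G e \<in> b01 G"
    and edge_in_bC: "e \<in> bE G \<Longrightarrow> \<exists>X\<in>bC G (br G e). e \<in> X"

lemma step_simps [simp]:
  "b00 (step G) = b01 G" "b01 (step G) = step_verts G" "bE (step G) = step_edges G"
  "br (step G) (Ex w x) = bs G x" "bs (step G) (Ex w x) = w"
  by (simp_all add: step_def)

lemma bC_step:
  "bC (step G) w = (if w \<in> b01 G
     then {{Ex o' x | o'. Ex o' x \<in> step_edges G} | x. x \<in> bE G \<and> bs G x = w} else {})"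
  by (simp add: step_def)

lemma Vx_in_step_verts_iff:
  "Vx u S \<in> step_verts G \<longleftrightarrow>
     u \<in> b00 G \<and> fset S \<subseteq> \<Union>(bC G u) \<and> (\<forall>X\<in>bC G u. \<exists>!x. x \<in> fset S \<inter> X)"
  by (auto simp: step_verts_def)

lemma Ex_in_step_edges_iff:
  "Ex w x \<in> step_edges G \<longleftrightarrow> w \<in> step_verts G \<and> (\<exists>u S. w = Vx u S \<and> x \<in> fset S)"
  by (auto simp: step_edges_def)

lemma step_verts_unique:
  assumes "Vx u S \<in> step_verts G" "X \<in> bC G u" "p \<in> fset S \<inter> X" "q \<in> fset S \<inter> X"
  shows "p = q"
  using assms by (auto simp: Vx_in_step_verts_iff)

lemma step_class_sources:
  assumes "Z \<in> bC (step G) w"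
  obtains x where "x \<in> bE G" "bs G x = w"
    "\<And>u S. Vx u S \<in> step_verts G \<Longrightarrow> x \<in> fset S \<Longrightarrow> Vx u S \<in> bs (step G) ` Z"
proof -
  from assms obtain x where x: "x \<in> bE G" "bs G x = w"
    and Z: "Z = {Ex o' x | o'. Ex o' x \<in> step_edges G}"
    by (auto simp: bC_step split: if_splits)
  have "Vx u S \<in> bs (step G) ` Z" if "Vx u S \<in> step_verts G" "x \<in> fset S" for u S
  proof (rule image_eqI)
    show "Ex (Vx u S) x \<in> Z"
      using that by (auto simp: Z step_edges_def)
  qed simp
  with x show ?thesis
    by (rule that)
qed

lemma finite_fset_subsets: "finite A \<Longrightarrow> finite {S. fset S \<subseteq> A}"
  using finite_vimageI[of "Pow A" fset] by (simp add: inj_def fset_inject vimage_def)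

context wf_bsg
begin

lemma exists_step_vert_choice:
  assumes "u \<in> b00 G" and "\<forall>X\<in>bC G u. g X \<in> X"
  shows "\<exists>S. Vx u S \<in> step_verts G \<and> fset S = g ` bC G u"
proof (intro exI conjI)
  let ?S = "Abs_fset (g ` bC G u)"
  show S: "fset ?S = g ` bC G u"
    using finite_bC[OF assms(1)] by (simp add: Abs_fset_inverse)
  have "\<exists>!x. x \<in> g ` bC G u \<inter> X" if X: "X \<in> bC G u" for X
  proof (rule ex1I[of _ "g X"])
    show "g X \<in> g ` bC G u \<inter> X"
      using X assms(2) by blast
    fix y assume "y \<in> g ` bC G u \<inter> X"
    then obtain X' where "X' \<in> bC G u" "y = g X'" "g X' \<in> X"
      by blast
    then show "y = g X"
      using X assms bC_disjoint by (metis disjoint_iff)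
  qed
  then show "Vx u ?S \<in> step_verts G"
    using assms by (auto simp: Vx_in_step_verts_iff S)
qed

lemma exists_step_vert_through:
  assumes x: "x \<in> bE G" and h: "\<forall>X\<in>bC G (br G x). h X \<in> X"
  shows "\<exists>S. Vx (br G x) S \<in> step_verts G \<and> x \<in> fset S \<and>
     fset S \<subseteq> insert x (h ` bC G (br G x)) \<and>
     (\<forall>X\<in>bC G (br G x). x \<notin> X \<longrightarrow> h X \<in> fset S)"
proof -
  define g where "g X = (if x \<in> X then x else h X)" for X
  have "\<forall>X\<in>bC G (br G x). g X \<in> X"
    using h by (simp add: g_def)
  then obtain S where S: "Vx (br G x) S \<in> step_verts G" "fset S = g ` bC G (br G x)"
    using exists_step_vert_choice[OF br_in_b00[OF x]] by blast
  obtain X0 where "X0 \<in> bC G (br G x)" "x \<in> X0"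
    using edge_in_bC[OF x] by blast
  then have "x \<in> fset S"
    unfolding S(2) by (metis g_def image_eqI)
  moreover have "fset S \<subseteq> insert x (h ` bC G (br G x))"
    unfolding S(2) g_def by auto
  moreover have "\<forall>X\<in>bC G (br G x). x \<notin> X \<longrightarrow> h X \<in> fset S"
    unfolding S(2) by (metis g_def image_eqI)
  ultimately show ?thesis
    using S(1) by blast
qed

lemma exists_step_edge_over:
  assumes x: "x \<in> bE G"
  shows "\<exists>w. Ex w x \<in> step_edges G"
proof -
  have "\<forall>X\<in>bC G (br G x). (SOME y. y \<in> X) \<in> X"
    using bC_nonempty[OF br_in_b00[OF x]] by (metis some_in_eq)
  then obtain S where "Vx (br G x) S \<in> step_verts G" "x \<in> fset S"
    using exists_step_vert_through[OF x] by meson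
  then show ?thesis
    unfolding Ex_in_step_edges_iff by blast
qed

lemma step_vert_choice_in_bE:
  assumes "Vx u S \<in> step_verts G" and "x \<in> fset S"
  shows "x \<in> bE G"
  using assms bC_subset_bE unfolding Vx_in_step_verts_iff by blast

lemma wf_step: "wf_bsg (step G)"
proof
  have "step_verts G \<subseteq> (\<lambda>(u, S). Vx u S) ` (b00 G \<times> {S. fset S \<subseteq> bE G})"
  proof
    fix w assume "w \<in> step_verts G"
    then obtain u S where "w = Vx u S" "u \<in> b00 G" "fset S \<subseteq> \<Union>(bC G u)"
      by (auto simp: step_verts_def)
    then show "w \<in> (\<lambda>(u, S). Vx u S) ` (b00 G \<times> {S. fset S \<subseteq> bE G})"
      using bC_subset_bE by blast
  qed
  then show fin_verts: "finite (b01 (step G))"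
    using finite_b00 finite_bE finite_fset_subsets
    by (metis finite_subset finite_imageI finite_cartesian_product step_simps(2))
  have "step_edges G \<subseteq> (\<lambda>(w, x). Ex w x) ` (step_verts G \<times> bE G)"
  proof
    fix e assume "e \<in> step_edges G"
    then obtain u S x where "e = Ex (Vx u S) x" "Vx u S \<in> step_verts G" "x \<in> fset S"
      by (auto simp: step_edges_def)
    moreover from this have "x \<in> bE G"
      using step_vert_choice_in_bE by blast
    ultimately show "e \<in> (\<lambda>(w, x). Ex w x) ` (step_verts G \<times> bE G)"
      by blast
  qed
  then show "finite (bE (step G))"
    using fin_verts finite_bE
    by (metis finite_subset finite_imageI finite_cartesian_product step_simps(2,3))
  show "finite (b00 (step G))"
    using finite_b01 by simp
  show "finite (bC (step G) u)" for u
    using finite_bE by (simp add: bC_step)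
  show "X \<noteq> {}" if "X \<in> bC (step G) u" for u X
    using that exists_step_edge_over by (auto simp: bC_step split: if_splits)
  show "X \<inter> Y = {}" if "X \<in> bC (step G) u" "Y \<in> bC (step G) u" "X \<noteq> Y" for u X Y
    using that by (auto simp: bC_step split: if_splits)
  show "X \<subseteq> bE (step G)" if "X \<in> bC (step G) u" for u X
    using that by (auto simp: bC_step split: if_splits)
  fix e assume "e \<in> bE (step G)"
  then obtain u S x where e: "e = Ex (Vx u S) x" "Vx u S \<in> step_verts G" "x \<in> fset S"
    by (auto simp: step_edges_def)
  then have x: "x \<in> bE G"
    using step_vert_choice_in_bE by blast
  then show "br (step G) e \<in> b00 (step G)"
    using e bs_in_b01 by simp
  show "bs (step G) e \<in> b01 (step G)"
    using e by simp
  show "\<exists>X\<in>bC (step G) (br (step G) e). e \<in> X"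
    using e x bs_in_b01[OF x] by (auto simp: bC_step step_edges_def)
qed

end

lemma level_0 [simp]: "level V00 V01 Ed r s C 0 = level0 V00 V01 Ed r s C"
  by (simp add: level_def)

lemma level_Suc [simp]: "level V00 V01 Ed r s C (Suc n) = step (level V00 V01 Ed r s C n)"
  by (simp add: level_def)

lemma level0_simps [simp]:
  "b00 (level0 V00 V01 Ed r s C) = V0 ` V00" "b01 (level0 V00 V01 Ed r s C) = V0 ` V01"
  "bE (level0 V00 V01 Ed r s C) = E0 ` Ed"
  "br (level0 V00 V01 Ed r s C) (E0 x) = V0 (r x)" "bs (level0 V00 V01 Ed r s C) (E0 x) = V0 (s x)"
  "bC (level0 V00 V01 Ed r s C) (V0 u) = (if u \<in> V00 then image E0 ` C u else {})"
  by (simp_all add: level0_def)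

lemma wf_level0:
  assumes "fin_bipartite_sep_graph V00 V01 Ed r s C"
  shows "wf_bsg (level0 V00 V01 Ed r s C)"
proof -
  have fin: "finite V00" "finite V01" "finite Ed" and ran: "r ` Ed = V00" "s ` Ed = V01"
    using assms by (simp_all add: fin_bipartite_sep_graph_def)
  have classes: "\<forall>v\<in>V00. (\<forall>X\<in>C v. X \<noteq> {}) \<and> \<Union>(C v) = {e\<in>Ed. r e = v} \<and>
      (\<forall>X\<in>C v. \<forall>Y\<in>C v. X \<noteq> Y \<longrightarrow> X \<inter> Y = {})"
    using assms unfolding fin_bipartite_sep_graph_def by blast
  then have covers: "\<Union>(C v) = {e\<in>Ed. r e = v}" if "v \<in> V00" for v
    using that by simp
  from classes have nonempty: "X \<noteq> {}"
    and disjoint: "X \<noteq> Y \<Longrightarrow> Y \<in> C v \<Longrightarrow> X \<inter> Y = {}"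
    if "v \<in> V00" "X \<in> C v" for v X Y
    using that by simp_all
  have finite_C: "finite (C v)" if "v \<in> V00" for v
  proof (rule finite_subset)
    show "C v \<subseteq> Pow Ed"
      using covers[OF that] by blast
  qed (simp add: fin)
  show ?thesis
  proof
    show "finite (b00 (level0 V00 V01 Ed r s C))" "finite (b01 (level0 V00 V01 Ed r s C))"
      "finite (bE (level0 V00 V01 Ed r s C))"
      using fin by simp_all
  next
    fix u X Y
    assume u: "u \<in> b00 (level0 V00 V01 Ed r s C)"
    then obtain v where v: "u = V0 v" "v \<in> V00"
      by auto
    show "finite (bC (level0 V00 V01 Ed r s C) u)"
      using v finite_C by simp
    assume X: "X \<in> bC (level0 V00 V01 Ed r s C) u"
    then show "X \<noteq> {}"
      using v nonempty by auto
    show "X \<subseteq> bE (level0 V00 V01 Ed r s C)"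
      using X v covers by auto
    assume Y: "Y \<in> bC (level0 V00 V01 Ed r s C) u" and "X \<noteq> Y"
    obtain X0 Y0 where "X = E0 ` X0" "Y = E0 ` Y0" "X0 \<in> C v" "Y0 \<in> C v"
      using X Y v by auto
    with \<open>X \<noteq> Y\<close> have "X0 \<inter> Y0 = {}"
      using disjoint v by blast
    then show "X \<inter> Y = {}"
      using \<open>X = E0 ` X0\<close> \<open>Y = E0 ` Y0\<close> by auto
  next
    fix e assume "e \<in> bE (level0 V00 V01 Ed r s C)"
    then obtain x where x: "e = E0 x" "x \<in> Ed"
      by auto
    then show "br (level0 V00 V01 Ed r s C) e \<in> b00 (level0 V00 V01 Ed r s C)"
      "bs (level0 V00 V01 Ed r s C) e \<in> b01 (level0 V00 V01 Ed r s C)"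
      using ran by auto
    show "\<exists>X\<in>bC (level0 V00 V01 Ed r s C) (br (level0 V00 V01 Ed r s C) e). e \<in> X"
      using x ran covers[of "r x"] by auto
  qed
qed

fun vertex_height :: "'v set \<Rightarrow> ('v, 'e) obj \<Rightarrow> nat" where
  "vertex_height A (V0 w) = (if w \<in> A then 0 else 1)"
| "vertex_height A (Vx u S) = vertex_height A u + 2"
| "vertex_height A _ = 0"

fun edge_height :: "'v set \<Rightarrow> ('v, 'e) obj \<Rightarrow> nat" where
  "edge_height A (Ex w x) = vertex_height A w - 1"
| "edge_height A _ = 0"

context
  fixes V00 V01 :: "'v set" and Ed :: "'e set" and r s :: "'e \<Rightarrow> 'v"
    and C :: "'v \<Rightarrow> 'e set set"
  assumes fb: "fin_bipartite_sep_graph V00 V01 Ed r s C"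
begin

private abbreviation "L \<equiv> level V00 V01 Ed r s C"
private abbreviation "F \<equiv> Finf V00 V01 Ed r s C"

lemma wf_level: "wf_bsg (L n)"
  by (induction n) (simp_all add: wf_level0[OF fb] wf_bsg.wf_step)

lemma vertex_height_b00: "x \<in> b00 (L n) \<Longrightarrow> vertex_height V00 x = n"
proof (induction n arbitrary: x rule: nat_induct2)
  case 0
  then show ?case
    by auto
next
  case 1
  moreover have "V00 \<inter> V01 = {}"
    using fb by (simp add: fin_bipartite_sep_graph_def)
  ultimately show ?case
    by auto
next
  case (step n)
  then obtain u S where "x = Vx u S" "u \<in> b00 (L n)"
    by (auto simp: step_verts_def)
  then show ?case
    using step.IH by simp
qed

lemma b00_level_unique: "x \<in> b00 (L i) \<Longrightarrow> x \<in> b00 (L j) \<Longrightarrow> i = j"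
  using vertex_height_b00 by metis

lemma edge_height_bE: "e \<in> bE (L n) \<Longrightarrow> edge_height V00 e = n"
proof (cases n)
  case (Suc k)
  assume "e \<in> bE (L n)"
  then obtain u S x where "e = Ex (Vx u S) x" "Vx u S \<in> b00 (L (Suc (Suc k)))"
    using Suc by (auto simp: step_edges_def)
  then show ?thesis
    using Suc vertex_height_b00 by fastforce
qed auto

lemma verts_Finf: "verts F = (\<Union>n. b00 (L n))"
proof -
  have "verts F = (\<Union>n. b00 (L n) \<union> b00 (L (Suc n)))"
    by (simp add: Finf_def Let_def)
  also have "\<dots> = (\<Union>n. b00 (L n))"
    by blast
  finally show ?thesis .
qed

lemma edges_Finf: "edges F = (\<Union>n. bE (L n))"
  by (simp add: Finf_def Let_def)

lemma Least_edge_level: "e \<in> bE (L n) \<Longrightarrow> (LEAST k. e \<in> bE (L k)) = n"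
  by (rule Least_equality) (metis edge_height_bE order_refl)+

lemma Least_vertex_level: "x \<in> b00 (L n) \<Longrightarrow> (LEAST k. x \<in> b00 (L k)) = n"
  by (rule Least_equality) (metis b00_level_unique order_refl)+

lemma rng_Finf: "e \<in> bE (L n) \<Longrightarrow> rng F e = br (L n) e"
  using Least_edge_level[of e n] by (simp add: Finf_def Let_def)

lemma src_Finf: "e \<in> bE (L n) \<Longrightarrow> src F e = bs (L n) e"
  using Least_edge_level[of e n] by (simp add: Finf_def Let_def)

lemma sepn_Finf: "x \<in> b00 (L n) \<Longrightarrow> sepn F x = bC (L n) x"
  using Least_vertex_level[of x n] by (auto simp: Finf_def Let_def)

lemma level_of_sepn_Finf: "sepn F x \<noteq> {} \<Longrightarrow> \<exists>n. x \<in> b00 (L n)"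
  by (simp add: Finf_def Let_def split: if_splits) blast

context
  fixes n0 :: nat and v :: "('v, 'e) obj" and X Y :: "('v, 'e) obj set" and a a' b b' :: "('v, 'e) obj"
  assumes v: "v \<in> b00 (L n0)"
    and X: "X \<in> bC (L n0) v" and Y: "Y \<in> bC (L n0) v" and "X \<noteq> Y"
    and a: "a \<in> X" "a' \<in> X" "a \<noteq> a'" and b: "b \<in> Y" "b' \<in> Y" "b \<noteq> b'"
begin

primrec layer :: "nat \<Rightarrow> ('v, 'e) obj set" where
  "layer 0 = {Vx u S | u S. Vx u S \<in> step_verts (L n0) \<and> u = v \<and> a \<in> fset S \<and> b \<in> fset S}"
| "layer (Suc m) = {Vx u S | u S. Vx u S \<in> step_verts (L (Suc (n0 + m))) \<and>
      (\<exists>z\<in>fset S. bs (L (Suc (n0 + m))) z \<in> layer m)}"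

lemma layer_subset_b00: "layer m \<subseteq> b00 (L (Suc (Suc (n0 + m))))"
  by (cases m) auto

lemma layer_level: "x \<in> layer m \<Longrightarrow> x \<in> b00 (L k) \<Longrightarrow> k = Suc (Suc (n0 + m))"
  using layer_subset_b00 b00_level_unique by blast

lemma layer_hereditary:
  assumes e: "e \<in> bE (L (Suc (Suc (n0 + m))))" and "br (L (Suc (Suc (n0 + m)))) e \<in> layer m"
  shows "bs (L (Suc (Suc (n0 + m)))) e \<in> layer (Suc m)"
proof -
  obtain u S z where "e = Ex (Vx u S) z" "Vx u S \<in> step_verts (L (Suc (n0 + m)))" "z \<in> fset S"
    using e by (auto simp: step_edges_def)
  then show ?thesis
    using assms by auto
qed

lemma base_layer_unsaturated:
  assumes Z: "Z \<in> bC (L (Suc n0)) w"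
  shows "\<not> bs (L (Suc n0)) ` Z \<subseteq> layer 0"
proof
  assume sub: "bs (L (Suc n0)) ` Z \<subseteq> layer 0"
  interpret wf_bsg "L n0"
    by (rule wf_level)
  obtain x where x: "x \<in> bE (L n0)"
    and through: "\<And>u S. Vx u S \<in> step_verts (L n0) \<Longrightarrow> x \<in> fset S \<Longrightarrow> Vx u S \<in> bs (L (Suc n0)) ` Z"
    using Z by (auto elim: step_class_sources)
  define h where "h X' = (if X' = Y then b' else if X' = X then a' else (SOME y. y \<in> X'))" for X'
  have "\<forall>X'\<in>bC (L n0) (br (L n0) x). h X' \<in> X'"
    using a b bC_nonempty[OF br_in_b00[OF x]] by (simp add: h_def some_in_eq)
  then obtain S where S: "Vx (br (L n0) x) S \<in> step_verts (L n0)" "x \<in> fset S"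
    "\<forall>X'\<in>bC (L n0) (br (L n0) x). x \<notin> X' \<longrightarrow> h X' \<in> fset S"
    using exists_step_vert_through[OF x] by meson
  then have "Vx (br (L n0) x) S \<in> layer 0"
    using through sub by blast
  then have u: "br (L n0) x = v" and "a \<in> fset S" "b \<in> fset S"
    by auto
  show False
  proof (cases "x \<in> Y")
    case False
    then have "h Y \<in> fset S"
      using S(3) Y u by simp
    then have "b' \<in> fset S"
      by (simp add: h_def)
    then show False
      using step_verts_unique[OF S(1)] Y u b \<open>b \<in> fset S\<close> by blast
  next
    case True
    then have "x \<notin> X"
      using bC_disjoint[OF v X Y \<open>X \<noteq> Y\<close>] by blast
    then have "h X \<in> fset S"
      using S(3) X u by simp
    then have "a' \<in> fset S"
      using \<open>X \<noteq> Y\<close> by (simp add: h_def)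
    then show False
      using step_verts_unique[OF S(1)] X u a \<open>a \<in> fset S\<close> by blast
  qed
qed

lemma layer_saturation:
  "Z \<in> bC (L (Suc (n0 + m))) w \<Longrightarrow> bs (L (Suc (n0 + m))) ` Z \<subseteq> layer m \<Longrightarrow>
    \<exists>m'. m = Suc m' \<and> w \<in> layer m'"
proof (induction m arbitrary: Z w)
  case 0
  then show ?case
    using base_layer_unsaturated[of Z w] by simp
next
  case (Suc m)
  let ?k = "Suc (n0 + m)"
  interpret wf_bsg "L ?k"
    by (rule wf_level)
  have "Z \<in> bC (step (L ?k)) w"
    using Suc.prems(1) by simp
  then obtain x where x: "x \<in> bE (L ?k)" "bs (L ?k) x = w"
    and through: "\<And>u S. Vx u S \<in> step_verts (L ?k) \<Longrightarrow> x \<in> fset S \<Longrightarrow> Vx u S \<in> bs (step (L ?k)) ` Z"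
    by (rule step_class_sources) blast
  let ?u = "br (L ?k) x"
  have "w \<in> layer m"
  proof (rule ccontr)
    assume w: "w \<notin> layer m"
    have "\<exists>z. z \<in> X' \<and> bs (L ?k) z \<notin> layer m" if X': "X' \<in> bC (L ?k) ?u" for X'
    proof (rule ccontr)
      assume "\<nexists>z. z \<in> X' \<and> bs (L ?k) z \<notin> layer m"
      then have "bs (L ?k) ` X' \<subseteq> layer m"
        by blast
      then obtain m' where m': "m = Suc m'" "?u \<in> layer m'"
        using Suc.IH[OF X'] by blast
      then have "w \<in> layer m"
        using layer_hereditary[of x m'] x by simp
      with w show False ..
    qed
    then obtain h where h: "\<forall>X'\<in>bC (L ?k) ?u. h X' \<in> X' \<and> bs (L ?k) (h X') \<notin> layer m"
      using bchoice[of "bC (L ?k) ?u"] by meson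
    then obtain S where S: "Vx ?u S \<in> step_verts (L ?k)" "x \<in> fset S"
      "fset S \<subseteq> insert x (h ` bC (L ?k) ?u)"
      using exists_step_vert_through[OF x(1), of h] by meson
    then have "Vx ?u S \<in> bs (step (L ?k)) ` Z"
      using through by blast
    then have "Vx ?u S \<in> layer (Suc m)"
      using Suc.prems(2) by auto
    then obtain z where z: "z \<in> fset S" "bs (L ?k) z \<in> layer m"
      by auto
    moreover have "z \<noteq> x"
      using z(2) x(2) w by blast
    ultimately show False
      using S(3) h by blast
  qed
  then show ?case
    by blast
qed

lemma layers_subset_verts: "(\<Union>m. layer m) \<subseteq> verts F"
  unfolding verts_Finf using layer_subset_b00 by blast

lemma src_in_layer_level:
  assumes e: "e \<in> bE (L k)" and "src F e \<in> layer m"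
  shows "k = Suc (n0 + m)"
proof -
  have "src F e \<in> b00 (L (Suc k))"
    using e wf_bsg.bs_in_b01[OF wf_level] by (simp add: src_Finf)
  from layer_level[OF assms(2) this] show ?thesis
    by simp
qed

lemma layers_hereditary: "hereditary F (\<Union>m. layer m)"
  unfolding hereditary_def
proof (intro conjI ballI impI layers_subset_verts)
  fix e assume "e \<in> edges F" and "rng F e \<in> (\<Union>m. layer m)"
  then obtain k m where e: "e \<in> bE (L k)" and r: "br (L k) e \<in> layer m"
    by (auto simp: edges_Finf rng_Finf)
  moreover have "k = Suc (Suc (n0 + m))"
    using layer_level[OF r wf_bsg.br_in_b00[OF wf_level e]] .
  ultimately have "bs (L k) e \<in> layer (Suc m)"
    using layer_hereditary by blast
  then show "src F e \<in> (\<Union>m. layer m)"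
    unfolding src_Finf[OF e] by blast
qed

lemma layers_saturated: "saturated F (\<Union>m. layer m)"
  unfolding saturated_def
proof (intro ballI impI)
  fix w Z assume "w \<in> verts F" "Z \<in> sepn F w" and sub: "src F ` Z \<subseteq> (\<Union>m. layer m)"
  then obtain k where w: "w \<in> b00 (L k)"
    by (auto simp: verts_Finf)
  with \<open>Z \<in> sepn F w\<close> have Z: "Z \<in> bC (L k) w"
    by (simp add: sepn_Finf)
  have Z_edges: "Z \<subseteq> bE (L k)"
    using wf_bsg.bC_subset_bE[OF wf_level w Z] .
  obtain e where "e \<in> Z"
    using wf_bsg.bC_nonempty[OF wf_level w Z] by blast
  then obtain j where "src F e \<in> layer j"
    using sub by blast
  then have j: "k = Suc (n0 + j)"
    using src_in_layer_level Z_edges \<open>e \<in> Z\<close> by blast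
  have "bs (L k) ` Z \<subseteq> layer j"
  proof
    fix x assume "x \<in> bs (L k) ` Z"
    then obtain e' where e': "e' \<in> Z" "x = src F e'"
      using Z_edges src_Finf[of _ k] by auto
    then obtain m where m: "src F e' \<in> layer m"
      using sub by blast
    then have "m = j"
      using src_in_layer_level[of e' k m] Z_edges e'(1) j by auto
    with e' m show "x \<in> layer j"
      by simp
  qed
  then obtain m' where "w \<in> layer m'"
    using layer_saturation[OF Z[unfolded j]] unfolding j by blast
  then show "w \<in> (\<Union>m. layer m)"
    by blast
qed

lemma base_layer_nonempty: "layer 0 \<noteq> {}"
proof -
  interpret wf_bsg "L n0"
    by (rule wf_level)
  define h where "h X' = (if X' = X then a else if X' = Y then b else (SOME y. y \<in> X'))" for X'
  have "\<forall>X'\<in>bC (L n0) v. h X' \<in> X'"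
    using a b bC_nonempty[OF v] by (simp add: h_def some_in_eq)
  then obtain S where S: "Vx v S \<in> step_verts (L n0)" "fset S = h ` bC (L n0) v"
    using exists_step_vert_choice[OF v] by blast
  have "a \<in> fset S" "b \<in> fset S"
    unfolding S(2) using X Y \<open>X \<noteq> Y\<close> by (metis h_def image_eqI)+
  then show ?thesis
    using S(1) by auto
qed

lemma root_notin_layers: "v \<notin> (\<Union>m. layer m)"
proof
  assume "v \<in> (\<Union>m. layer m)"
  then obtain m where "v \<in> layer m"
    by blast
  from layer_level[OF this v] show False
    by simp
qed

lemma HS_Finf_nontrivial: "HS F \<noteq> {{}, verts F}"
proof
  assume HS: "HS F = {{}, verts F}"
  have "(\<Union>m. layer m) \<in> HS F"
    unfolding HS_def using layers_subset_verts layers_hereditary layers_saturated by blast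
  then have "(\<Union>m. layer m) \<in> {{}, verts F}"
    unfolding HS .
  moreover have "(\<Union>m. layer m) \<noteq> {}"
    using base_layer_nonempty by blast
  moreover have "(\<Union>m. layer m) \<noteq> verts F"
    using root_notin_layers v by (auto simp: verts_Finf)
  ultimately show False
    by (metis insert_iff singletonD)
qed

end

end

theorem lemma8:
  fixes V00 V01 :: "'v set" and Ed :: "'e set" and r s :: "'e \<Rightarrow> 'v"
    and C :: "'v \<Rightarrow> 'e set set"
  assumes "fin_bipartite_sep_graph V00 V01 Ed r s C"
    and "HS (Finf V00 V01 Ed r s C) = {{}, verts (Finf V00 V01 Ed r s C)}"
  shows "\<forall>v\<in>verts (Finf V00 V01 Ed r s C).
           \<forall>X\<in>sepn (Finf V00 V01 Ed r s C) v. \<forall>Y\<in>sepn (Finf V00 V01 Ed r s C) v.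
             card X > 1 \<longrightarrow> card Y > 1 \<longrightarrow> X = Y"
proof (intro ballI impI; rule ccontr)
  fix v X Y
  assume X: "X \<in> sepn (Finf V00 V01 Ed r s C) v" and Y: "Y \<in> sepn (Finf V00 V01 Ed r s C) v"
    and "card X > 1" "card Y > 1" "X \<noteq> Y"
  obtain n where v: "v \<in> b00 (level V00 V01 Ed r s C n)"
    using level_of_sepn_Finf[OF assms(1)] X by blast
  have "\<exists>p\<in>A. \<exists>q\<in>A. p \<noteq> q" if "card A > 1" for A :: "('v, 'e) obj set"
    using that card_le_Suc0_iff_eq[of A] card.infinite[of A] by fastforce
  then obtain a a' b b' where "a \<in> X" "a' \<in> X" "a \<noteq> a'" "b \<in> Y" "b' \<in> Y" "b \<noteq> b'"
    using \<open>card X > 1\<close> \<open>card Y > 1\<close> by meson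
  with X Y v \<open>X \<noteq> Y\<close> show False
    using HS_Finf_nontrivial[OF assms(1) v] assms(2) by (simp add: sepn_Finf[OF assms(1) v])
qed

end
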